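(* For any integer $t\geq 3$, there exist a connected graph $G$ and a function $g:V(G_1)\to V(G_2)$ such that $Dist(G)-Dist(F_G)=t$.
   Context: $Dist(H)$ is the least $t$ such that $H$ has a labeling $V(H)\to\{1,\dots,t\}$ preserved by no non-identity automorphism of $H$. Functigraph: for disjoint copies $G_1,G_2$ of a connected graph $G$ and a function $g:V(G_1)\to V(G_2)$, $F_G$ has vertex set $V(G_1)\cup V(G_2)$ and edge set $E(G_1)\cup E(G_2)\cup\{uv: u\in V(G_1),\ g(u)=v\}$. *)

theory Defs
  imports Main
begin

definition simple_graph :: "'a set \<Rightarrow> ('a \<Rightarrow> 'a \<Rightarrow> bool) \<Rightarrow> bool" where
  "simple_graph V E \<longleftrightarrow> finite V \<and>
     (\<forall>u v. E u v \<longrightarrow> u \<in> V \<and> v \<in> V \<and> u \<noteq> v \<and> E v u)"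

definition connected_graph :: "'a set \<Rightarrow> ('a \<Rightarrow> 'a \<Rightarrow> bool) \<Rightarrow> bool" where
  "connected_graph V E \<longleftrightarrow> simple_graph V E \<and> V \<noteq> {} \<and>
     (\<forall>u\<in>V. \<forall>v\<in>V. E\<^sup>*\<^sup>* u v)"

definition automorphism :: "'a set \<Rightarrow> ('a \<Rightarrow> 'a \<Rightarrow> bool) \<Rightarrow> ('a \<Rightarrow> 'a) \<Rightarrow> bool" where
  "automorphism V E \<sigma> \<longleftrightarrow> bij_betw \<sigma> V V \<and>
     (\<forall>u\<in>V. \<forall>v\<in>V. E u v \<longleftrightarrow> E (\<sigma> u) (\<sigma> v))"

definition distinguishing_labeling ::
  "'a set \<Rightarrow> ('a \<Rightarrow> 'a \<Rightarrow> bool) \<Rightarrow> nat \<Rightarrow> ('a \<Rightarrow> nat) \<Rightarrow> bool" where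
  "distinguishing_labeling V E t c \<longleftrightarrow> c ` V \<subseteq> {1..t} \<and>
     (\<forall>\<sigma>. automorphism V E \<sigma> \<and> (\<forall>v\<in>V. c (\<sigma> v) = c v) \<longrightarrow> (\<forall>v\<in>V. \<sigma> v = v))"

definition Dist :: "'a set \<Rightarrow> ('a \<Rightarrow> 'a \<Rightarrow> bool) \<Rightarrow> nat" where
  "Dist V E = (LEAST t. \<exists>c. distinguishing_labeling V E t c)"

text \<open>Functigraph: G_1 is the copy Inl ` V, G_2 the copy Inr ` V, and g maps V(G_1) to V(G_2)
(encoded as a function on V).\<close>
definition functigraph_V :: "'a set \<Rightarrow> ('a + 'a) set" where
  "functigraph_V V = Inl ` V \<union> Inr ` V"

fun functigraph_E :: "('a \<Rightarrow> 'a \<Rightarrow> bool) \<Rightarrow> 'a set \<Rightarrow> ('a \<Rightarrow> 'a) \<Rightarrow> ('a + 'a) \<Rightarrow> ('a + 'a) \<Rightarrow> bool" where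
  "functigraph_E E V g (Inl u) (Inl v) = E u v"
| "functigraph_E E V g (Inr u) (Inr v) = E u v"
| "functigraph_E E V g (Inl u) (Inr v) = (u \<in> V \<and> g u = v)"
| "functigraph_E E V g (Inr v) (Inl u) = (u \<in> V \<and> g u = v)"

end

theory Submission
  imports Defs "HOL-Combinatorics.Transposition"
begin

text \<open>Take for G the star with centre 0 and leaves 1, ..., 2m, and let g fix the centre and
the leaves 1, ..., m and send the leaves m+1, ..., 2m to the centre. In a simple graph two
vertices with the same neighbourhood can be swapped by an automorphism, so a distinguishing
labeling is injective on every such class of twins. The 2m leaves of G are twins, and labeling
the centre like leaf 1 shows Dist(G) = 2m. In the functigraph only the m copies of the leaves
m+1, ..., 2m in the second copy remain twins, so Dist(F_G) \<ge> m; conversely, with m labels the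
two centres are the only vertices of degree at least 3 and get distinct labels, and every other
vertex is then singled out by its label together with its adjacencies to vertices already known
to be fixed.\<close>

lemma Dist_eqI:
  assumes "distinguishing_labeling V E k c"
    and "\<And>k' c'. distinguishing_labeling V E k' c' \<Longrightarrow> k \<le> k'"
  shows "Dist V E = k"
  unfolding Dist_def using assms by (blast intro: Least_equality)

lemma simple_graph_functigraph:
  assumes "simple_graph V E" and "g ` V \<subseteq> V"
  shows "simple_graph (functigraph_V V) (functigraph_E E V g)"
proof -
  have "u \<in> functigraph_V V \<and> v \<in> functigraph_V V \<and> u \<noteq> v \<and> functigraph_E E V g v u"
    if "functigraph_E E V g u v" for u v
    using that assms by (cases u; cases v) (auto simp: simple_graph_def functigraph_V_def)
  then show ?thesis
    using assms(1) by (auto simp: simple_graph_def functigraph_V_def)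
qed

lemma automorphism_transpose_twins:
  assumes "simple_graph V E" and "p \<in> V" and "q \<in> V"
    and twins: "\<And>x. E p x \<longleftrightarrow> E q x"
  shows "automorphism V E (transpose p q)"
proof -
  have E_sym: "E x y \<longleftrightarrow> E y x" for x y
    using assms(1) by (auto simp: simple_graph_def)
  have swap: "E (transpose p q u) x \<longleftrightarrow> E u x" for u x
    using twins[of x] by (simp add: transpose_def)
  have "E (transpose p q u) (transpose p q v) \<longleftrightarrow> E u v" for u v
  proof -
    have "E (transpose p q u) (transpose p q v) \<longleftrightarrow> E (transpose p q v) u"
      using swap E_sym by blast
    also have "\<dots> \<longleftrightarrow> E u v"
      using swap E_sym by blast
    finally show ?thesis .
  qed
  then show ?thesis
    using assms(2,3) by (simp add: automorphism_def)
qed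

lemma card_twins_le_distinguishing_labeling:
  assumes "simple_graph V E" and "distinguishing_labeling V E k c" and "S \<subseteq> V"
    and twins: "\<And>p q x. p \<in> S \<Longrightarrow> q \<in> S \<Longrightarrow> E p x \<longleftrightarrow> E q x"
  shows "card S \<le> k"
proof -
  have "inj_on c S"
  proof (rule inj_onI, rule ccontr)
    fix p q assume pq: "p \<in> S" "q \<in> S" "c p = c q" "p \<noteq> q"
    have "automorphism V E (transpose p q)"
      using pq assms(1,3) twins[OF pq(1,2)] by (intro automorphism_transpose_twins) blast+
    moreover have "\<forall>v\<in>V. c (transpose p q v) = c v"
      using pq by (simp add: transpose_def)
    ultimately have "\<forall>v\<in>V. transpose p q v = v"
      using assms(2) unfolding distinguishing_labeling_def by blast
    then have "transpose p q p = p"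
      using assms(3) pq by blast
    with \<open>p \<noteq> q\<close> show False by simp
  qed
  then have "card S = card (c ` S)" by (simp add: card_image)
  also have "\<dots> \<le> card {1..k}"
  proof (rule card_mono)
    show "c ` S \<subseteq> {1..k}"
      using assms(2,3) unfolding distinguishing_labeling_def by blast
  qed simp
  finally show ?thesis by simp
qed

definition neighbours :: "'a set \<Rightarrow> ('a \<Rightarrow> 'a \<Rightarrow> bool) \<Rightarrow> 'a \<Rightarrow> 'a set" where
  "neighbours V E v = {w \<in> V. E v w}"

lemma card_neighbours_automorphism:
  assumes "automorphism V E \<sigma>" and "v \<in> V"
  shows "card (neighbours V E (\<sigma> v)) = card (neighbours V E v)"
proof -
  have bij: "bij_betw \<sigma> V V"
    and adj: "\<And>u w. u \<in> V \<Longrightarrow> w \<in> V \<Longrightarrow> E u w \<longleftrightarrow> E (\<sigma> u) (\<sigma> w)"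
    using assms(1) by (auto simp: automorphism_def)
  have "\<sigma> ` neighbours V E v = neighbours V E (\<sigma> v)"
  proof
    show "\<sigma> ` neighbours V E v \<subseteq> neighbours V E (\<sigma> v)"
      using bij adj assms(2) by (auto simp: neighbours_def bij_betw_apply)
    show "neighbours V E (\<sigma> v) \<subseteq> \<sigma> ` neighbours V E v"
    proof
      fix w assume "w \<in> neighbours V E (\<sigma> v)"
      moreover obtain w' where "w' \<in> V" "w = \<sigma> w'"
        using bij \<open>w \<in> _\<close> by (auto simp: neighbours_def bij_betw_def)
      ultimately show "w \<in> \<sigma> ` neighbours V E v"
        using adj assms(2) by (auto simp: neighbours_def)
    qed
  qed
  moreover have "inj_on \<sigma> (neighbours V E v)"
    using bij by (auto simp: bij_betw_def neighbours_def intro: inj_on_subset)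
  ultimately show ?thesis by (metis card_image)
qed

lemma automorphism_fixes_if_unique_profile:
  assumes aut: "automorphism V E \<sigma>" and lab: "\<forall>w\<in>V. c (\<sigma> w) = c w"
    and U: "U \<subseteq> V" "\<forall>u\<in>U. \<sigma> u = u" and v: "v \<in> V - U"
    and unique:
      "\<And>w. w \<in> V - U \<Longrightarrow> c w = c v \<Longrightarrow> (\<forall>u\<in>U. E u w \<longleftrightarrow> E u v) \<Longrightarrow> w = v"
  shows "\<sigma> v = v"
proof (rule unique)
  have bij: "bij_betw \<sigma> V V"
    and adj: "\<And>u w. u \<in> V \<Longrightarrow> w \<in> V \<Longrightarrow> E u w \<longleftrightarrow> E (\<sigma> u) (\<sigma> w)"
    using aut by (auto simp: automorphism_def)
  have "\<sigma> v \<notin> U"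
    using U v bij by (metis Diff_iff bij_betw_iff_bijections subsetD)
  then show "\<sigma> v \<in> V - U" using v bij by (auto simp: bij_betw_apply)
  show "c (\<sigma> v) = c v" using lab v by blast
  show "\<forall>u\<in>U. E u (\<sigma> v) \<longleftrightarrow> E u v" using adj U v by (metis Diff_iff subsetD)
qed

definition star_V :: "nat \<Rightarrow> nat set" where
  "star_V n = {0..n}"

definition star_E :: "nat \<Rightarrow> nat \<Rightarrow> nat \<Rightarrow> bool" where
  "star_E n u v \<longleftrightarrow> u \<le> n \<and> v \<le> n \<and> u \<noteq> v \<and> (u = 0 \<or> v = 0)"

lemma connected_star: "connected_graph (star_V n) (star_E n)"
proof -
  have to_centre: "(star_E n)\<^sup>*\<^sup>* u 0" and from_centre: "(star_E n)\<^sup>*\<^sup>* 0 u"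
    if "u \<le> n" for u
    using that by (cases "u = 0"; auto simp: star_E_def intro: r_into_rtranclp)+
  have "(star_E n)\<^sup>*\<^sup>* u v" if "u \<le> n" "v \<le> n" for u v
    using rtranclp_trans[OF to_centre from_centre] that .
  then show ?thesis
    by (auto simp: connected_graph_def simple_graph_def star_V_def star_E_def)
qed

lemma Dist_star:
  assumes "2 \<le> n"
  shows "Dist (star_V n) (star_E n) = n"
proof (rule Dist_eqI)
  show "distinguishing_labeling (star_V n) (star_E n) n (max 1)"
    unfolding distinguishing_labeling_def
  proof (intro conjI allI impI)
    show "max 1 ` star_V n \<subseteq> {1..n}"
      using assms by (auto simp: star_V_def)
    fix \<sigma>
    assume "automorphism (star_V n) (star_E n) \<sigma> \<and> (\<forall>v\<in>star_V n. max 1 (\<sigma> v) = max 1 v)"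
    then have aut: "automorphism (star_V n) (star_E n) \<sigma>"
      and lab: "\<forall>v\<in>star_V n. max 1 (\<sigma> v) = max 1 v" by blast+
    have leaves: "\<sigma> v = v" if "v \<in> {2..n}" for v
      by (rule automorphism_fixes_if_unique_profile[OF aut lab, of "{}"])
        (use that in \<open>auto simp: star_V_def max_def split: if_splits\<close>)
    have centre_and_first_leaf: "\<sigma> v = v" if "v \<le> 1" for v
    proof (rule automorphism_fixes_if_unique_profile[OF aut lab, of "{2..n}"])
      show "{2..n} \<subseteq> star_V n" "\<forall>u\<in>{2..n}. \<sigma> u = u" "v \<in> star_V n - {2..n}"
        using leaves that assms by (auto simp: star_V_def)
      fix w assume "w \<in> star_V n - {2..n}" "max 1 w = max 1 v"
        and "\<forall>u\<in>{2..n}. star_E n u w \<longleftrightarrow> star_E n u v"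
      then have "w \<le> 1" "star_E n 2 w \<longleftrightarrow> star_E n 2 v"
        using assms by (auto simp: star_V_def)
      then show "w = v"
        using that assms by (auto simp: star_E_def)
    qed
    show "\<forall>v\<in>star_V n. \<sigma> v = v"
    proof
      fix v assume "v \<in> star_V n"
      then show "\<sigma> v = v"
        using leaves[of v] centre_and_first_leaf[of v] by (cases "v \<le> 1") (auto simp: star_V_def)
    qed
  qed
next
  fix k c assume dl: "distinguishing_labeling (star_V n) (star_E n) k c"
  have "card {1..n} \<le> k"
  proof (rule card_twins_le_distinguishing_labeling[OF _ dl])
    show "simple_graph (star_V n) (star_E n)"
      using connected_star by (simp add: connected_graph_def)
    show "{1..n} \<subseteq> star_V n"
      by (auto simp: star_V_def)
    show "star_E n p x \<longleftrightarrow> star_E n q x" if "p \<in> {1..n}" "q \<in> {1..n}" for p q x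
      using that by (auto simp: star_E_def)
  qed
  then show "n \<le> k" by simp
qed

definition star_fold :: "nat \<Rightarrow> nat \<Rightarrow> nat" where
  "star_fold m i = (if i \<le> m then i else 0)"

abbreviation F_V :: "nat \<Rightarrow> (nat + nat) set" where
  "F_V m \<equiv> functigraph_V (star_V (2 * m))"

abbreviation F_E :: "nat \<Rightarrow> nat + nat \<Rightarrow> nat + nat \<Rightarrow> bool" where
  "F_E m \<equiv> functigraph_E (star_E (2 * m)) (star_V (2 * m)) (star_fold m)"

lemma F_V_iff: "x \<in> F_V m \<longleftrightarrow> (\<exists>i\<le>2 * m. x = Inl i) \<or> (\<exists>j\<le>2 * m. x = Inr j)"
  by (auto simp: functigraph_V_def star_V_def)

lemma simple_graph_F: "simple_graph (F_V m) (F_E m)"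
  using connected_star[of "2 * m"]
  by (intro simple_graph_functigraph) (auto simp: connected_graph_def star_fold_def star_V_def)

lemma distinguishing_labeling_F_ge:
  assumes "distinguishing_labeling (F_V m) (F_E m) k c"
  shows "m \<le> k"
proof -
  have "card (Inr ` {m+1..2 * m} :: (nat + nat) set) \<le> k"
  proof (rule card_twins_le_distinguishing_labeling[OF simple_graph_F assms])
    show "Inr ` {m+1..2 * m} \<subseteq> F_V m"
      by (auto simp: F_V_iff)
    show "F_E m p x \<longleftrightarrow> F_E m q x"
      if "p \<in> Inr ` {m+1..2 * m}" and "q \<in> Inr ` {m+1..2 * m}" for p q x
      using that by (cases x) (auto simp: star_V_def star_E_def star_fold_def split: if_splits)
  qed
  then show ?thesis by (simp add: card_image)
qed

lemma card_neighbours_F_le_2: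
  assumes "x \<in> F_V m" and "x \<noteq> Inl 0" and "x \<noteq> Inr 0"
  shows "card (neighbours (F_V m) (F_E m) x) \<le> 2"
proof -
  obtain a b where "neighbours (F_V m) (F_E m) x \<subseteq> {a, b}"
  proof (cases x)
    case (Inl i)
    with assms have "neighbours (F_V m) (F_E m) x \<subseteq> {Inl 0, Inr (star_fold m i)}"
      by (auto simp: neighbours_def functigraph_V_def star_V_def star_E_def)
    then show ?thesis using that by blast
  next
    case (Inr j)
    with assms have "neighbours (F_V m) (F_E m) x \<subseteq> {Inr 0, Inl j}"
      by (auto simp: neighbours_def functigraph_V_def star_V_def star_E_def star_fold_def
          split: if_splits)
    then show ?thesis using that by blast
  qed
  then have "card (neighbours (F_V m) (F_E m) x) \<le> card {a, b}"
    by (intro card_mono) simp_all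
  also have "\<dots> \<le> 2"
    by (cases "a = b") simp_all
  finally show ?thesis .
qed

lemma card_neighbours_F_centres:
  assumes "2 \<le> m" and "x = Inl 0 \<or> x = Inr 0"
  shows "3 \<le> card (neighbours (F_V m) (F_E m) x)"
proof -
  obtain a b c where abc: "distinct [a, b, c]" "{a, b, c} \<subseteq> neighbours (F_V m) (F_E m) x"
  proof (cases "x = Inl 0")
    case True
    then have "{Inl 1, Inl 2, Inr 0} \<subseteq> neighbours (F_V m) (F_E m) x"
      using assms(1)
      by (auto simp: neighbours_def functigraph_V_def star_V_def star_E_def star_fold_def)
    then show ?thesis using that[of "Inl 1" "Inl 2" "Inr 0"] by simp
  next
    case False
    then have "{Inr 1, Inr 2, Inl 0} \<subseteq> neighbours (F_V m) (F_E m) x"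
      using assms
      by (auto simp: neighbours_def functigraph_V_def star_V_def star_E_def star_fold_def)
    then show ?thesis using that[of "Inr 1" "Inr 2" "Inl 0"] by simp
  qed
  have "finite (neighbours (F_V m) (F_E m) x)"
    by (simp add: neighbours_def functigraph_V_def star_V_def)
  then have "card {a, b, c} \<le> card (neighbours (F_V m) (F_E m) x)"
    using abc(2) by (rule card_mono)
  with abc(1) show ?thesis by simp
qed

definition F_labeling :: "nat \<Rightarrow> nat + nat \<Rightarrow> nat" where
  "F_labeling m x = (case x of
      Inl i \<Rightarrow> if i = 0 then 1 else if i \<le> m then i else i - m
    | Inr j \<Rightarrow> if j = 0 then 2 else if j \<le> m then 1 else j - m)"

lemma distinguishing_F_labeling:
  assumes "2 \<le> m"
  shows "distinguishing_labeling (F_V m) (F_E m) m (F_labeling m)"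
  unfolding distinguishing_labeling_def
proof (intro conjI allI impI)
  show "F_labeling m ` F_V m \<subseteq> {1..m}"
    using assms by (auto simp: F_labeling_def F_V_iff) arith+
  fix \<sigma>
  assume "automorphism (F_V m) (F_E m) \<sigma> \<and> (\<forall>v\<in>F_V m. F_labeling m (\<sigma> v) = F_labeling m v)"
  then have aut: "automorphism (F_V m) (F_E m) \<sigma>"
    and lab: "\<forall>v\<in>F_V m. F_labeling m (\<sigma> v) = F_labeling m v" by blast+
  have centres: "\<forall>u\<in>{Inl 0, Inr 0}. \<sigma> u = u"
  proof
    fix x :: "nat + nat" assume x: "x \<in> {Inl 0, Inr 0}"
    then have xV: "x \<in> F_V m" by (auto simp: F_V_iff)
    then have "\<sigma> x \<in> F_V m"
      using aut by (auto simp: automorphism_def bij_betw_apply)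
    moreover have "3 \<le> card (neighbours (F_V m) (F_E m) (\<sigma> x))"
      using card_neighbours_automorphism[OF aut xV] card_neighbours_F_centres[OF assms] x by simp
    ultimately have "\<sigma> x = Inl 0 \<or> \<sigma> x = Inr 0"
      using card_neighbours_F_le_2 by force
    then show "\<sigma> x = x"
      using lab xV x by (auto simp: F_labeling_def)
  qed
  have first_copy: "\<sigma> (Inl i) = Inl i" if "i \<le> 2 * m" for i
  proof (cases "i = 0")
    case False
    show ?thesis
    proof (rule automorphism_fixes_if_unique_profile[OF aut lab _ centres])
      show "{Inl 0, Inr 0} \<subseteq> F_V m" "Inl i \<in> F_V m - {Inl 0, Inr 0}"
        using that False by (auto simp: F_V_iff)
      fix w assume w: "w \<in> F_V m - {Inl 0, Inr 0}" "F_labeling m w = F_labeling m (Inl i)"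
        and "\<forall>u\<in>{Inl 0, Inr 0}. F_E m u w \<longleftrightarrow> F_E m u (Inl i)"
      then have "F_E m (Inl 0) w \<longleftrightarrow> F_E m (Inl 0) (Inl i)"
        and "F_E m (Inr 0) w \<longleftrightarrow> F_E m (Inr 0) (Inl i)"
        by blast+
      with w that False show "w = Inl i"
        by (cases w)
          (auto simp: functigraph_V_def star_V_def star_E_def star_fold_def F_labeling_def
            split: if_splits)
    qed
  qed (use centres in simp)
  have second_copy: "\<sigma> (Inr j) = Inr j" if "j \<le> 2 * m" for j
  proof (cases "j = 0")
    case False
    let ?U = "insert (Inr 0) (Inl ` star_V (2 * m))"
    show ?thesis
    proof (rule automorphism_fixes_if_unique_profile[OF aut lab, of ?U])
      show "?U \<subseteq> F_V m" "Inr j \<in> F_V m - ?U"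
        using that False by (auto simp: functigraph_V_def star_V_def)
      show "\<forall>u\<in>?U. \<sigma> u = u"
        using centres first_copy by (auto simp: star_V_def)
      fix w assume w: "w \<in> F_V m - ?U" "F_labeling m w = F_labeling m (Inr j)"
        and adj: "\<forall>u\<in>?U. F_E m u w \<longleftrightarrow> F_E m u (Inr j)"
      then obtain k where k: "w = Inr k" "0 < k" "k \<le> 2 * m"
        by (auto simp: functigraph_V_def star_V_def)
      have "F_E m (Inl k) w \<longleftrightarrow> F_E m (Inl k) (Inr j)"
        and "F_E m (Inl j) w \<longleftrightarrow> F_E m (Inl j) (Inr j)"
        using adj k that by (auto simp: star_V_def)
      with w k that False show "w = Inr j"
        by (auto simp: star_V_def star_fold_def F_labeling_def split: if_splits)
    qed
  qed (use centres in simp)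
  show "\<forall>v\<in>F_V m. \<sigma> v = v"
    using first_copy second_copy by (auto simp: F_V_iff)
qed

lemma Dist_F:
  assumes "2 \<le> m"
  shows "Dist (F_V m) (F_E m) = m"
  using distinguishing_F_labeling[OF assms] distinguishing_labeling_F_ge by (rule Dist_eqI)

theorem lemma2p8:
  fixes t :: int
  assumes "t \<ge> 3"
  shows "\<exists>(V :: nat set) E g. connected_graph V E \<and> g ` V \<subseteq> V \<and>
    int (Dist V E) - int (Dist (functigraph_V V) (functigraph_E E V g)) = t"
proof -
  define m where "m = nat t"
  have m: "2 \<le> m" and t: "t = int m"
    using assms by (auto simp: m_def)
  show ?thesis
  proof (intro exI conjI)
    show "connected_graph (star_V (2 * m)) (star_E (2 * m))"
      by (rule connected_star)
    show "star_fold m ` star_V (2 * m) \<subseteq> star_V (2 * m)"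
      by (auto simp: star_fold_def star_V_def)
    show "int (Dist (star_V (2 * m)) (star_E (2 * m))) - int (Dist (F_V m) (F_E m)) = t"
      using Dist_star[of "2 * m"] Dist_F[OF m] m t by simp
  qed
qed

end
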